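(* For arbitrary natural numbers $N>n$ and any $r\in\mathcal R_N$, the projection $\chi^r_n:A(r)\to A(p_n(r))$, $(b_1,\dots,b_N)\mapsto(b_1,\dots,b_n)$, is surjective; i.e. for each $a=(a_1,\dots,a_n)\in A(p_n(r))$ there exists $(b_{n+1},\dots,b_N)$ with $(a_1,\dots,a_n,b_{n+1},\dots,b_N)\in A(r)$.
   Context: $\mathcal R_N$ is the set of real symmetric $N\times N$ matrices with zero diagonal, nonnegative entries and $r_{i,k}+r_{k,j}\ge r_{i,j}$; $p_n(r)$ is the upper-left $n\times n$ corner of $r$. For a distance matrix $q$ of order $m$, $A(q)=\{a\in\mathbb R^m: |a_i-a_j|\le q_{i,j}\le a_i+a_j\ \forall i,j\}$. *)

theory Defs
  imports Main "HOL-Library.FuncSet" Complex_Main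
begin

text \<open>Matrices of order N are represented as functions nat => nat => real,
  with indices 0..N-1 (only entries with i, j < N matter).
  Vectors in R^m are functions nat => real, indices 0..m-1.\<close>

definition distmat :: "nat \<Rightarrow> (nat \<Rightarrow> nat \<Rightarrow> real) \<Rightarrow> bool" where
  "distmat N r \<longleftrightarrow>
     (\<forall>i<N. \<forall>j<N. r i j = r j i) \<and>
     (\<forall>i<N. r i i = 0) \<and>
     (\<forall>i<N. \<forall>j<N. r i j \<ge> 0) \<and>
     (\<forall>i<N. \<forall>j<N. \<forall>k<N. r i k + r k j \<ge> r i j)"

definition RN :: "nat \<Rightarrow> (nat \<Rightarrow> nat \<Rightarrow> real) set" where
  "RN N = {r. distmat N r}"

definition pcorner :: "nat \<Rightarrow> (nat \<Rightarrow> nat \<Rightarrow> real) \<Rightarrow> (nat \<Rightarrow> nat \<Rightarrow> real)" where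
  "pcorner n r = (\<lambda>i j. if i < n \<and> j < n then r i j else 0)"

definition Aset :: "nat \<Rightarrow> (nat \<Rightarrow> nat \<Rightarrow> real) \<Rightarrow> (nat \<Rightarrow> real) set" where
  "Aset m q = {a. (\<forall>i. i \<ge> m \<longrightarrow> a i = 0) \<and>
     (\<forall>i<m. \<forall>j<m. \<bar>a i - a j\<bar> \<le> q i j \<and> q i j \<le> a i + a j)}"

end

theory Submission
  imports Defs
begin

text \<open>Extend a point of \<open>A(p\<^sub>n(r))\<close> one coordinate at a time. The admissible values of a
  new coordinate \<open>x = b\<^sub>k\<close> are those in every interval \<open>[\<bar>r\<^sub>i\<^sub>k - b\<^sub>i\<bar>, b\<^sub>i + r\<^sub>i\<^sub>k]\<close>, \<open>i < k\<close>
  (and \<open>x \<ge> 0\<close>, forced by \<open>r\<^sub>k\<^sub>k = 0\<close>). By the triangle inequality these intervals overlap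
  pairwise, so the largest of 0 and the lower bounds is admissible.\<close>

lemma distmat_sym: "distmat N r \<Longrightarrow> i < N \<Longrightarrow> j < N \<Longrightarrow> r i j = r j i"
  unfolding distmat_def by blast

lemma distmat_diag: "distmat N r \<Longrightarrow> i < N \<Longrightarrow> r i i = 0"
  unfolding distmat_def by blast

lemma distmat_triangle:
  "distmat N r \<Longrightarrow> i < N \<Longrightarrow> j < N \<Longrightarrow> l < N \<Longrightarrow> r i j \<le> r i l + r l j"
  unfolding distmat_def by blast

lemma Aset_pcorner: "Aset n (pcorner n r) = Aset n r"
  unfolding Aset_def pcorner_def by auto

lemma Aset_upd_Suc:
  assumes d: "distmat N r" and k: "k < N" and b: "b \<in> Aset k r" and "0 \<le> x"
    and bounds: "\<And>i. i < k \<Longrightarrow> \<bar>r i k - b i\<bar> \<le> x \<and> x \<le> b i + r i k"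
  shows "b(k := x) \<in> Aset (Suc k) r"
proof -
  have new: "\<bar>x - b i\<bar> \<le> r i k \<and> r i k \<le> x + b i \<and> r i k \<le> b i + x \<and> r k i = r i k"
    if "i < k" for i
    using bounds[OF that] distmat_sym[OF d k, of i] that k by (auto simp: abs_le_iff)
  show ?thesis
    using b \<open>0 \<le> x\<close> distmat_diag[OF d k] new unfolding Aset_def
    by (auto simp: less_Suc_eq abs_minus_commute)
qed

lemma Aset_interval_overlap:
  assumes d: "distmat N r" and k: "k < N" and b: "b \<in> Aset k r" and i: "i < k" and j: "j < k"
  shows "\<bar>r i k - b i\<bar> \<le> b j + r j k"
proof -
  have "\<bar>b i - b j\<bar> \<le> r i j" "r i j \<le> b i + b j"
    using b i j unfolding Aset_def by auto
  moreover have "r i k \<le> r i j + r j k" "r i j \<le> r i k + r k j" "r k j = r j k"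
    using distmat_triangle[OF d, of i k j] distmat_triangle[OF d, of i j k]
      distmat_sym[OF d k, of j] i j k by simp_all
  ultimately show ?thesis by (simp add: abs_le_iff)
qed

lemma Aset_extend_Suc:
  assumes d: "distmat N r" and k: "k < N" and b: "b \<in> Aset k r"
  shows "\<exists>x. b(k := x) \<in> Aset (Suc k) r"
proof -
  define L where "L = insert 0 ((\<lambda>i. \<bar>r i k - b i\<bar>) ` {..<k})"
  define x where "x = Max L"
  have "finite L" unfolding L_def by simp
  then have lower: "l \<le> x" if "l \<in> L" for l
    using that unfolding x_def by simp
  have upper: "x \<le> b j + r j k" if "j < k" for j
  proof -
    have "x \<in> L" unfolding x_def using \<open>finite L\<close> by (intro Max_in) (auto simp: L_def)
    moreover have "0 \<le> b j + r j k"
      using Aset_interval_overlap[OF d k b that that] by linarith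
    ultimately show ?thesis
      unfolding L_def using Aset_interval_overlap[OF d k b _ that] by auto
  qed
  have "b(k := x) \<in> Aset (Suc k) r"
    using lower upper by (intro Aset_upd_Suc[OF d k b]) (auto simp: L_def)
  then show ?thesis ..
qed

lemma Aset_extend:
  assumes d: "distmat N r" and "n \<le> m" and "m \<le> N" and b: "b \<in> Aset n r"
  shows "\<exists>c \<in> Aset m r. \<forall>i<n. c i = b i"
  using \<open>n \<le> m\<close> \<open>m \<le> N\<close>
proof (induction m rule: dec_induct)
  case base
  then show ?case using b by blast
next
  case (step m)
  then obtain c where c: "c \<in> Aset m r" "\<forall>i<n. c i = b i" by auto
  obtain x where "c(m := x) \<in> Aset (Suc m) r"
    using Aset_extend_Suc[OF d _ c(1)] step.prems by auto
  moreover have "\<forall>i<n. (c(m := x)) i = b i"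
    using c(2) step.hyps(1) by simp
  ultimately show ?case by blast
qed

theorem lemma4:
  fixes N n :: nat and r :: "nat \<Rightarrow> nat \<Rightarrow> real" and a :: "nat \<Rightarrow> real"
  assumes "n < N" and "r \<in> RN N" and "a \<in> Aset n (pcorner n r)"
  shows "\<exists>b \<in> Aset N r. \<forall>i<n. b i = a i"
proof -
  have "distmat N r" using assms(2) unfolding RN_def by simp
  moreover have "a \<in> Aset n r" using assms(3) by (simp add: Aset_pcorner)
  ultimately show ?thesis using Aset_extend assms(1) by auto
qed

end
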